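(* Let $d > 4$ be an integer and let $K$ be the field of fractions of a complete discrete valuation ring $\mathcal{O}$. In the coefficient-choosing game of degree $d$ over $K$, whichever player makes the last move has a winning strategy.
   Context: The coefficient-choosing game of degree $d$ over $K$: Nora and Wanda alternately choose coefficients of $f(x) = a_d x^d + \cdots + a_0$; on each move the current player picks a not-yet-chosen coefficient and assigns it a value in $K$, subject to $a_d \neq 0$, $a_0 \neq 0$. After all $d+1$ coefficients are chosen, Wanda wins if $f$ has a root in $K$, and Nora wins otherwise. Who moves first is fixed in advance, which determines who makes the last move. *)

theory Defs
  imports "HOL-Computational_Algebra.Polynomial"
begin

text \<open>A (normalised) discrete valuation on a field K: a surjective map from
  the nonzero elements onto the integers with v(xy) = v x + v y and
  v(x+y) \<ge> min (v x) (v y) (the value of v at 0 is irrelevant, it stands for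
  infinity). Its valuation ring is O = {x. x = 0 \<or> v x \<ge> 0}, which is a DVR
  with fraction field K, and every DVR with fraction field K arises this way.\<close>

definition discrete_valuation :: "('a::field \<Rightarrow> int) \<Rightarrow> bool" where
  "discrete_valuation v \<longleftrightarrow>
     (\<forall>x y. x \<noteq> 0 \<longrightarrow> y \<noteq> 0 \<longrightarrow> v (x * y) = v x + v y) \<and>
     (\<forall>x y. x \<noteq> 0 \<longrightarrow> y \<noteq> 0 \<longrightarrow> x + y \<noteq> 0 \<longrightarrow> v (x + y) \<ge> min (v x) (v y)) \<and>
     (\<forall>k. \<exists>x. x \<noteq> 0 \<and> v x = k)"

definition valuation_ring :: "('a::field \<Rightarrow> int) \<Rightarrow> 'a set" where
  "valuation_ring v = {x. x = 0 \<or> v x \<ge> 0}"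

definition val_close :: "('a::field \<Rightarrow> int) \<Rightarrow> int \<Rightarrow> 'a \<Rightarrow> 'a \<Rightarrow> bool" where
  "val_close v k x y \<longleftrightarrow> x = y \<or> v (x - y) \<ge> k"

definition val_complete :: "('a::field \<Rightarrow> int) \<Rightarrow> bool" where
  "val_complete v \<longleftrightarrow>
     (\<forall>s :: nat \<Rightarrow> 'a.
        (\<forall>k. \<exists>N. \<forall>m\<ge>N. \<forall>n\<ge>N. val_close v k (s m) (s n)) \<longrightarrow>
        (\<exists>L. \<forall>k. \<exists>N. \<forall>n\<ge>N. val_close v k (s n) L))"

text \<open>K is the field of fractions of a complete discrete valuation ring
  (namely of valuation_ring v).\<close>
definition complete_dvf :: "('a::field \<Rightarrow> int) \<Rightarrow> bool" where
  "complete_dvf v \<longleftrightarrow> discrete_valuation v \<and> val_complete v"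

text \<open>A position is a partial assignment c of coefficients a_0,...,a_d
  (None = not yet chosen). A legal move chooses an unchosen index i \<le> d and a
  value a, with a \<noteq> 0 if i = 0 or i = d.\<close>

definition legal_move :: "nat \<Rightarrow> (nat \<Rightarrow> 'a::zero option) \<Rightarrow> nat \<Rightarrow> 'a \<Rightarrow> bool" where
  "legal_move d c i a \<longleftrightarrow> i \<le> d \<and> c i = None \<and> ((i = 0 \<or> i = d) \<longrightarrow> a \<noteq> 0)"

definition game_poly :: "nat \<Rightarrow> (nat \<Rightarrow> 'a::comm_ring_1 option) \<Rightarrow> 'a poly" where
  "game_poly d c = (\<Sum>i\<le>d. monom (the (c i)) i)"

definition has_root :: "'a::comm_ring_1 poly \<Rightarrow> bool" where
  "has_root f \<longleftrightarrow> (\<exists>x. poly f x = 0)"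

text \<open>Backward induction on the number n of remaining moves; the boolean says
  whether it is Wanda's turn. wanda_wins d n w c: Wanda has a winning
  strategy from position c; nora_wins analogously for Nora.\<close>

fun wanda_wins :: "nat \<Rightarrow> nat \<Rightarrow> bool \<Rightarrow> (nat \<Rightarrow> 'a::field option) \<Rightarrow> bool" where
  "wanda_wins d 0 w c = has_root (game_poly d c)"
| "wanda_wins d (Suc n) w c =
     (if w then (\<exists>i a. legal_move d c i a \<and> wanda_wins d n False (c(i := Some a)))
      else (\<forall>i a. legal_move d c i a \<longrightarrow> wanda_wins d n True (c(i := Some a))))"

fun nora_wins :: "nat \<Rightarrow> nat \<Rightarrow> bool \<Rightarrow> (nat \<Rightarrow> 'a::field option) \<Rightarrow> bool" where
  "nora_wins d 0 w c = (\<not> has_root (game_poly d c))"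
| "nora_wins d (Suc n) w c =
     (if w then (\<forall>i a. legal_move d c i a \<longrightarrow> nora_wins d n False (c(i := Some a)))
      else (\<exists>i a. legal_move d c i a \<and> nora_wins d n True (c(i := Some a))))"

definition wanda_has_winning_strategy :: "'a::field itself \<Rightarrow> nat \<Rightarrow> bool \<Rightarrow> bool" where
  "wanda_has_winning_strategy _ d wanda_first =
     wanda_wins d (Suc d) wanda_first (\<lambda>_. None :: 'a option)"

definition nora_has_winning_strategy :: "'a::field itself \<Rightarrow> nat \<Rightarrow> bool \<Rightarrow> bool" where
  "nora_has_winning_strategy _ d wanda_first =
     nora_wins d (Suc d) wanda_first (\<lambda>_. None :: 'a option)"

text \<open>Moves are numbered 1..d+1; the first player makes the odd-numbered
  moves, so Wanda makes the last move iff (Wanda moves first iff d+1 is odd).\<close>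
definition wanda_moves_last :: "nat \<Rightarrow> bool \<Rightarrow> bool" where
  "wanda_moves_last d wanda_first \<longleftrightarrow> (wanda_first \<longleftrightarrow> odd (Suc d))"

end

theory Submission
  imports Defs
begin

text \<open>If Wanda moves last, one coefficient a_j is free and f = p + a_j x^j with p \<noteq> 0, because
  a_0 and a_d cannot both be the free one (d > 0). As K is infinite there is x \<noteq> 0 with
  p(x) \<noteq> 0, and a_j = - p(x) / x^j makes x a root.

  If Nora moves last, she has at least three moves (d + 1 \<ge> 6), so she can fill a_1 and a_(d-1)
  herself and the last free coefficient is a_j with j \<notin> {1, d - 1}. She gives it valuation - N
  for a huge N. The Newton polygon of f is then the segment from (0, v a_0) to (d, v a_d), or the
  two segments through (j, - N), and N can be chosen modulo d, resp. modulo j and d - j, so that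
  no segment has integral slope; this needs j, d - j \<ge> 2 and not both 2, which is where d > 4
  enters. Hence for every x \<noteq> 0 exactly one term of f(x) has least valuation, so f(x) \<noteq> 0.\<close>

lemma gt_min_if_above_chord:
  fixes p k q r :: int
  assumes "p < k" "k < q" "(q - k) * a + (k - p) * b < (q - p) * c"
  shows "min (a + p * r) (b + q * r) < c + k * r"
proof (rule ccontr)
  let ?m = "min (a + p * r) (b + q * r)"
  assume "\<not> ?thesis"
  then have "c + k * r \<le> ?m"
    by (simp only: not_less)
  then have "(q - k) * (c + k * r) + (k - p) * (c + k * r) \<le> (q - k) * ?m + (k - p) * ?m"
    using assms(1,2) by (intro add_mono mult_left_mono) simp_all
  also have "\<dots> \<le> (q - k) * (a + p * r) + (k - p) * (b + q * r)"
    using assms(1,2) by (intro add_mono mult_left_mono) simp_all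
  finally show False
    using assms(3) by (simp add: algebra_simps)
qed

lemma ex_unique_min_if_ties_not_minimal:
  fixes T :: "'a \<Rightarrow> 'b::linorder"
  assumes "finite S" "S \<noteq> {}"
    and ties: "\<And>k m. k \<in> S \<Longrightarrow> m \<in> S \<Longrightarrow> k \<noteq> m \<Longrightarrow> T k = T m \<Longrightarrow> \<exists>l\<in>S. T l < T k"
  shows "\<exists>m\<in>S. \<forall>k\<in>S. k \<noteq> m \<longrightarrow> T m < T k"
proof (intro bexI ballI impI)
  let ?m = "arg_min_on T S"
  show m: "?m \<in> S"
    using arg_min_if_finite(1)[OF assms(1,2)] .
  have least: "T ?m \<le> T l" if "l \<in> S" for l
    using arg_min_least[OF assms(1,2) that] .
  fix k
  assume "k \<in> S" "k \<noteq> ?m"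
  show "T ?m < T k"
  proof (rule ccontr)
    assume "\<not> T ?m < T k"
    with least[OF \<open>k \<in> S\<close>] have "T k = T ?m"
      by simp
    with ties[OF \<open>k \<in> S\<close> m \<open>k \<noteq> ?m\<close>] least show False
      by fastforce
  qed
qed

text \<open>Newton polygons: in the next two lemmas the lower convex hull of the points (k, W k), k \<in> S,
  is one segment, respectively two segments meeting at (j, W j); all other points lie strictly
  above it and no segment has integral slope. So a line of integral slope - r supports the hull
  in exactly one point.\<close>

lemma unique_min_term_one_segment:
  fixes W :: "nat \<Rightarrow> int"
  assumes S: "finite S" "S \<subseteq> {..d}" "0 \<in> S" "d \<in> S"
    and above: "\<And>k. k \<in> S \<Longrightarrow> 0 < k \<Longrightarrow> k < d \<Longrightarrow> int (d - k) * W 0 + int k * W d < int d * W k"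
    and no_tie: "\<not> int d dvd (W 0 - W d)"
  shows "\<exists>m\<in>S. \<forall>k\<in>S. k \<noteq> m \<longrightarrow> W m + int m * r < W k + int k * r"
proof -
  define T where "T k = W k + int k * r" for k
  have not_min: "\<exists>l\<in>S. T l < T k" if "k \<in> S" "k \<notin> {0, d}" for k
  proof -
    have "min (T 0) (T d) < T k"
      using that S(2) above[of k] gt_min_if_above_chord[of 0 "int k" "int d" "W 0" "W d" "W k" r]
      by (force simp: T_def of_nat_diff)
    then show ?thesis
      using S(3,4) by (metis min_less_iff_disj)
  qed
  have "T 0 \<noteq> T d"
  proof
    assume "T 0 = T d"
    then have "W 0 - W d = int d * r"
      by (simp add: T_def)
    with no_tie show False
      by simp
  qed
  then have "\<exists>l\<in>S. T l < T k" if "k \<in> S" "m \<in> S" "k \<noteq> m" "T k = T m" for k m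
  proof (cases "k \<in> {0, d} \<and> m \<in> {0, d}")
    case True
    with that \<open>T 0 \<noteq> T d\<close> show ?thesis
      by auto
  next
    case False
    with that not_min[of k] not_min[of m] show ?thesis
      by auto
  qed
  then show ?thesis
    using ex_unique_min_if_ties_not_minimal[of S T] S unfolding T_def by blast
qed

lemma unique_min_term_two_segments:
  fixes W :: "nat \<Rightarrow> int"
  assumes S: "finite S" "S \<subseteq> {..d}" "0 \<in> S" "j \<in> S" "d \<in> S" and j: "0 < j" "j < d"
    and below: "int d * W j < int (d - j) * W 0 + int j * W d"
    and above_left: "\<And>k. k \<in> S \<Longrightarrow> 0 < k \<Longrightarrow> k < j \<Longrightarrow>
      int (j - k) * W 0 + int k * W j < int j * W k"
    and above_right: "\<And>k. k \<in> S \<Longrightarrow> j < k \<Longrightarrow> k < d \<Longrightarrow>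
      int (d - k) * W j + int (k - j) * W d < int (d - j) * W k"
    and no_tie: "\<not> int j dvd (W 0 - W j)" "\<not> int (d - j) dvd (W j - W d)"
  shows "\<exists>m\<in>S. \<forall>k\<in>S. k \<noteq> m \<longrightarrow> W m + int m * r < W k + int k * r"
proof -
  define T where "T k = W k + int k * r" for k
  have not_min: "\<exists>l\<in>S. T l < T k" if k: "k \<in> S" "k \<notin> {0, j, d}" for k
  proof -
    consider "0 < k" "k < j" | "j < k" "k < d"
      using k S(2) by fastforce
    then have "min (T 0) (T j) < T k \<or> min (T j) (T d) < T k"
    proof cases
      case 1
      then show ?thesis
        using k above_left[of k] gt_min_if_above_chord[of 0 "int k" "int j" "W 0" "W j" "W k" r]
        by (simp add: T_def of_nat_diff)
    next
      case 2
      then show ?thesis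
        using k above_right[of k] gt_min_if_above_chord[of "int j" "int k" "int d" "W j" "W d" "W k" r]
        by (simp add: T_def of_nat_diff)
    qed
    then show ?thesis
      using S(3,4,5) by (metis min_less_iff_disj)
  qed
  have "T 0 \<noteq> T j"
  proof
    assume "T 0 = T j"
    then have "W 0 - W j = int j * r"
      by (simp add: T_def)
    with no_tie(1) show False
      by simp
  qed
  moreover have "T j \<noteq> T d"
  proof
    assume "T j = T d"
    then have "W j - W d = int (d - j) * r"
      using j by (simp add: T_def of_nat_diff algebra_simps)
    with no_tie(2) show False
      by simp
  qed
  moreover have below_0: "T j < T 0" if "T 0 = T d"
  proof -
    have "int d * T j < int (d - j) * T 0 + int j * T d"
      using below j by (simp add: T_def of_nat_diff algebra_simps)
    also have "\<dots> = int d * T 0"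
      using that j by (simp add: of_nat_diff algebra_simps)
    finally have "int d * T j < int d * T 0" .
    then show ?thesis
      using j by (simp add: mult_less_cancel_left)
  qed
  ultimately have "\<exists>l\<in>S. T l < T k" if "k \<in> S" "m \<in> S" "k \<noteq> m" "T k = T m" for k m
  proof (cases "k \<in> {0, j, d} \<and> m \<in> {0, j, d}")
    case True
    with that \<open>T 0 \<noteq> T j\<close> \<open>T j \<noteq> T d\<close> have "T k = T 0" "T 0 = T d"
      by auto
    with below_0 S(4) show ?thesis
      by auto
  next
    case False
    with that not_min[of k] not_min[of m] show ?thesis
      by auto
  qed
  then show ?thesis
    using ex_unique_min_if_ties_not_minimal[of S T] S unfolding T_def by blast
qed

lemma not_dvd_both:
  fixes p x e :: int
  assumes "0 < e" "e < p"
  shows "\<not> (p dvd x \<and> p dvd (x + e))"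
  using assms zdvd_not_zless by (auto simp: dvd_add_right_iff)

lemma ex_gt_not_dvd:
  fixes p c L :: int
  assumes "2 \<le> p"
  shows "\<exists>N>L. \<not> p dvd (c + N)"
proof (cases "p dvd (c + (L + 1))")
  case True
  then have "\<not> p dvd (c + (L + 1) + 1)"
    using not_dvd_both[of 1 p "c + (L + 1)"] assms by simp
  then have "\<not> p dvd (c + (L + 1 + 1))"
    unfolding add.assoc .
  then show ?thesis
    by (intro exI[of _ "L + 1 + 1"]) simp
next
  case False
  then show ?thesis
    by (intro exI[of _ "L + 1"]) simp
qed

lemma ex_gt_not_dvd_both:
  fixes p q a b L :: int
  assumes "2 \<le> p" "3 \<le> q"
  shows "\<exists>N>L. \<not> p dvd (a + N) \<and> \<not> q dvd (b + N)"
proof (cases "p = 2")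
  case True
  obtain N where N: "L < N" "\<not> p dvd (a + N)"
    using ex_gt_not_dvd assms(1) by blast
  have shift: "a + (N + 2) = (a + N) + p" "b + (N + 2) = (b + N) + 2"
    using True by simp_all
  consider "\<not> q dvd (b + N)" | "\<not> q dvd (b + (N + 2))"
    using not_dvd_both[of 2 q "b + N"] assms(2) unfolding shift by fastforce
  then show ?thesis
  proof cases
    case 1
    with N show ?thesis
      by blast
  next
    case 2
    moreover have "\<not> p dvd (a + (N + 2))"
      using N(2) unfolding shift by (simp add: dvd_add_left_iff)
    moreover have "L < N + 2"
      using N(1) by simp
    ultimately show ?thesis
      by blast
  qed
next
  case False
  then have "3 \<le> p"
    using assms(1) by simp
  have once: "\<not> (x dvd (y + (L + e)) \<and> x dvd (y + (L + e')))"
    if "3 \<le> x" "1 \<le> e" "e < e'" "e' \<le> 3" for x y e e' :: int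
  proof -
    have "y + (L + e') = y + (L + e) + (e' - e)"
      by simp
    then show ?thesis
      using not_dvd_both[of "e' - e" x "y + (L + e)"] that by simp
  qed
  have "\<exists>e\<in>{1, 2, 3}. \<not> p dvd (a + (L + e)) \<and> \<not> q dvd (b + (L + e))"
    using once[OF \<open>3 \<le> p\<close>, of 1 2 a] once[OF \<open>3 \<le> p\<close>, of 1 3 a] once[OF \<open>3 \<le> p\<close>, of 2 3 a]
      once[OF assms(2), of 1 2 b] once[OF assms(2), of 1 3 b] once[OF assms(2), of 2 3 b]
    by simp blast
  then show ?thesis
    by force
qed

lemma ex_deep_point_avoiding_ties:
  fixes w :: "nat \<Rightarrow> int" and L :: int
  assumes "5 \<le> d" "j \<le> d" "j \<noteq> 1" "j \<noteq> d - 1"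
  shows "\<exists>N>L. (j = 0 \<longrightarrow> \<not> int d dvd (w d + N)) \<and> (j = d \<longrightarrow> \<not> int d dvd (w 0 + N)) \<and>
    (0 < j \<and> j < d \<longrightarrow> \<not> int j dvd (w 0 + N) \<and> \<not> int (d - j) dvd (w d + N))"
proof -
  consider "j = 0" | "j = d" | "3 \<le> j" "2 \<le> d - j" "j < d" | "j = 2" "3 \<le> d - j"
    using assms by linarith
  then show ?thesis
  proof cases
    case 1
    then show ?thesis
      using ex_gt_not_dvd[of "int d" L "w d"] assms(1) by auto
  next
    case 2
    then show ?thesis
      using ex_gt_not_dvd[of "int d" L "w 0"] assms(1) by auto
  next
    case 3
    then have "2 \<le> int (d - j)" "3 \<le> int j"
      by simp_all
    then obtain N where "L < N" "\<not> int (d - j) dvd (w d + N)" "\<not> int j dvd (w 0 + N)"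
      using ex_gt_not_dvd_both[of "int (d - j)" "int j" L "w d" "w 0"] by blast
    then show ?thesis
      by auto
  next
    case 4
    then have "2 \<le> int j" "3 \<le> int (d - j)"
      by simp_all
    then obtain N where "L < N" "\<not> int j dvd (w 0 + N)" "\<not> int (d - j) dvd (w d + N)"
      using ex_gt_not_dvd_both[of "int j" "int (d - j)" L "w 0" "w d"] by blast
    then show ?thesis
      by auto
  qed
qed

lemma neg_mult_lt_if_bounded:
  fixes y z B N :: int
  assumes "\<bar>y\<bar> \<le> B" "\<bar>z\<bar> \<le> B" "c \<le> D" "c' \<le> D" "2 * (int D * B) < N" "0 < e"
  shows "- (int e * N) < int c * y + int c' * z"
proof -
  have "\<bar>int c * y\<bar> \<le> int D * B" "\<bar>int c' * z\<bar> \<le> int D * B"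
    using assms(1-4) by (auto simp: abs_mult intro!: mult_mono)
  moreover have "0 \<le> N"
    using assms(1,5) by (smt (verit) abs_ge_zero mult_nonneg_nonneg of_nat_0_le_iff)
  then have "N \<le> int e * N"
    using mult_right_mono[of 1 "int e" N] assms(6) by simp
  ultimately show ?thesis
    using assms(5) by linarith
qed

lemma unique_min_term_deep_point:
  fixes w :: "nat \<Rightarrow> int"
  assumes S: "S \<subseteq> {..d}" "0 \<in> S" "j \<in> S" "d \<in> S" and "0 < d"
    and bound: "\<And>k. k \<le> d \<Longrightarrow> \<bar>w k\<bar> \<le> B" and deep: "2 * (int d * B) < N"
    and no_tie: "j = 0 \<Longrightarrow> \<not> int d dvd (w d + N)" "j = d \<Longrightarrow> \<not> int d dvd (w 0 + N)"
      "0 < j \<Longrightarrow> j < d \<Longrightarrow> \<not> int j dvd (w 0 + N) \<and> \<not> int (d - j) dvd (w d + N)"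
  shows "\<exists>m\<in>S. \<forall>k\<in>S. k \<noteq> m \<longrightarrow> (w(j := - N)) m + int m * r < (w(j := - N)) k + int k * r"
proof -
  define W where "W = w(j := - N)"
  have fin: "finite S"
    using S(1) finite_subset by blast
  have lt: "- (int e * N) < int c * y + int c' * z"
    if "y \<in> {w k, - w k}" "z \<in> {w k', - w k'}" "k \<le> d" "k' \<le> d" "c \<le> d" "c' \<le> d" "0 < e"
    for y z k k' c c' e
  proof (rule neg_mult_lt_if_bounded[where B = B and D = d, OF _ _ _ _ deep])
    show "\<bar>y\<bar> \<le> B" "\<bar>z\<bar> \<le> B"
      using that(1,2) bound[OF that(3)] bound[OF that(4)] by auto
  qed (use that in auto)
  consider "j = 0" | "j = d" | "0 < j" "j < d"
    using S by fastforce
  then have "\<exists>m\<in>S. \<forall>k\<in>S. k \<noteq> m \<longrightarrow> W m + int m * r < W k + int k * r"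
  proof cases
    case 1
    show ?thesis
    proof (rule unique_min_term_one_segment[OF fin S(1,2,4)])
      fix k
      assume k: "k \<in> S" "0 < k" "k < d"
      then have "- (int (d - k) * N) < int d * w k + int k * - w d"
        using lt[of "w k" k "- w d" d d k "d - k"] by simp
      then show "int (d - k) * W 0 + int k * W d < int d * W k"
        using 1 k by (simp add: W_def)
    next
      have "W 0 - W d = - (w d + N)"
        using 1 \<open>0 < d\<close> by (simp add: W_def)
      then show "\<not> int d dvd (W 0 - W d)"
        using no_tie(1)[OF 1] by (simp only: dvd_minus_iff not_False_eq_True)
    qed
  next
    case 2
    show ?thesis
    proof (rule unique_min_term_one_segment[OF fin S(1,2,4)])
      fix k
      assume k: "k \<in> S" "0 < k" "k < d"
      then have "- (int k * N) < int d * w k + int (d - k) * - w 0"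
        using lt[of "w k" k "- w 0" 0 d "d - k" k] by simp
      then show "int (d - k) * W 0 + int k * W d < int d * W k"
        using 2 k by (simp add: W_def)
    next
      show "\<not> int d dvd (W 0 - W d)"
        using 2 no_tie(2) \<open>0 < d\<close> by (simp add: W_def)
    qed
  next
    case 3
    show ?thesis
    proof (rule unique_min_term_two_segments[OF fin S(1-4) 3])
      have "- (int d * N) < int (d - j) * w 0 + int j * w d"
        using 3 lt[of "w 0" 0 "w d" d "d - j" j d] by simp
      then show "int d * W j < int (d - j) * W 0 + int j * W d"
        using 3 by (simp add: W_def)
    next
      fix k
      assume k: "k \<in> S" "0 < k" "k < j"
      then have "- (int k * N) < int j * w k + int (j - k) * - w 0"
        using 3 lt[of "w k" k "- w 0" 0 j "j - k" k] by simp
      then show "int (j - k) * W 0 + int k * W j < int j * W k"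
        using 3 k by (simp add: W_def)
    next
      fix k
      assume k: "k \<in> S" "j < k" "k < d"
      then have "- (int (d - k) * N) < int (d - j) * w k + int (k - j) * - w d"
        using 3 lt[of "w k" k "- w d" d "d - j" "k - j" "d - k"] by simp
      then show "int (d - k) * W j + int (k - j) * W d < int (d - j) * W k"
        using 3 k by (simp add: W_def)
    next
      have "W 0 - W j = w 0 + N" "W j - W d = - (w d + N)"
        using 3 by (simp_all add: W_def)
      then show "\<not> int j dvd (W 0 - W j)" "\<not> int (d - j) dvd (W j - W d)"
        using no_tie(3)[OF 3] by (simp_all only: dvd_minus_iff not_False_eq_True)
    qed
  qed
  then show ?thesis
    unfolding W_def .
qed

lemma ex_monom_add_has_root:
  fixes p :: "'a::field poly"
  assumes "infinite (UNIV :: 'a set)" "p \<noteq> 0"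
  shows "\<exists>a. a \<noteq> 0 \<and> has_root (p + monom a j)"
proof -
  have "finite (insert 0 {x. poly p x = 0})"
    using poly_roots_finite[OF assms(2)] by simp
  then obtain x where x: "x \<noteq> 0" "poly p x \<noteq> 0"
    using ex_new_if_finite[OF assms(1)] by blast
  define a where "a = - poly p x / x ^ j"
  have "poly (p + monom a j) x = 0"
    using x by (simp add: a_def poly_monom)
  moreover have "a \<noteq> 0"
    using x by (simp add: a_def)
  ultimately show ?thesis
    unfolding has_root_def by blast
qed

context
  fixes v :: "'a::field \<Rightarrow> int"
  assumes dv: "discrete_valuation v"
begin

lemma valuation_mult: "x \<noteq> 0 \<Longrightarrow> y \<noteq> 0 \<Longrightarrow> v (x * y) = v x + v y"
  using dv unfolding discrete_valuation_def by blast

lemma valuation_add_ge_min: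
  "x \<noteq> 0 \<Longrightarrow> y \<noteq> 0 \<Longrightarrow> x + y \<noteq> 0 \<Longrightarrow> min (v x) (v y) \<le> v (x + y)"
  using dv unfolding discrete_valuation_def by blast

lemma valuation_surj: "\<exists>x. x \<noteq> 0 \<and> v x = k"
  using dv unfolding discrete_valuation_def by blast

lemma valuation_one: "v 1 = 0"
  using valuation_mult[of 1 1] by simp

lemma valuation_minus:
  assumes "x \<noteq> 0"
  shows "v (- x) = v x"
proof -
  have "v ((- 1) * (- 1)) = v (- 1) + v (- 1)"
    by (rule valuation_mult) simp_all
  then have "v (- 1) = 0"
    using valuation_one by simp
  moreover have "v ((- 1) * x) = v (- 1) + v x"
    using assms by (intro valuation_mult) simp_all
  ultimately show ?thesis
    by simp
qed

lemma valuation_power: "x \<noteq> 0 \<Longrightarrow> v (x ^ n) = int n * v x"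
  by (induction n) (simp_all add: valuation_one valuation_mult algebra_simps)

lemma valuation_sum_gt:
  assumes "finite S" "\<And>k. k \<in> S \<Longrightarrow> t k = 0 \<or> V < v (t k)"
  shows "sum t S = 0 \<or> V < v (sum t S)"
  using assms
proof (induction S rule: finite_induct)
  case empty
  then show ?case by simp
next
  case (insert k S)
  then have IH: "sum t S = 0 \<or> V < v (sum t S)" and tk: "t k = 0 \<or> V < v (t k)"
    by simp_all
  show ?case
  proof (cases "t k = 0 \<or> sum t S = 0 \<or> t k + sum t S = 0")
    case True
    then show ?thesis
      using IH tk insert.hyps by auto
  next
    case False
    then have "min (v (t k)) (v (sum t S)) \<le> v (t k + sum t S)"
      by (intro valuation_add_ge_min) simp_all
    then show ?thesis
      using IH tk False insert.hyps by auto
  qed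
qed

lemma sum_nonzero_if_unique_min_valuation:
  assumes "finite S" "m \<in> S" "t m \<noteq> 0"
    and unique: "\<And>k. k \<in> S \<Longrightarrow> k \<noteq> m \<Longrightarrow> t k \<noteq> 0 \<Longrightarrow> v (t m) < v (t k)"
  shows "sum t S \<noteq> 0"
proof
  assume "sum t S = 0"
  moreover have "sum t S = t m + sum t (S - {m})"
    using assms(1,2) by (simp add: sum.remove)
  ultimately have rest: "sum t (S - {m}) = - t m"
    by (simp add: eq_neg_iff_add_eq_0 add.commute)
  have "sum t (S - {m}) = 0 \<or> v (t m) < v (sum t (S - {m}))"
    using assms(1) unique by (intro valuation_sum_gt) auto
  then show False
    unfolding rest using \<open>t m \<noteq> 0\<close> valuation_minus by simp
qed

lemma poly_nonzero_if_unique_min_term: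
  assumes "x \<noteq> 0" "coeff p m \<noteq> 0"
    and unique: "\<And>k. k \<noteq> m \<Longrightarrow> coeff p k \<noteq> 0 \<Longrightarrow>
      v (coeff p m) + int m * v x < v (coeff p k) + int k * v x"
  shows "poly p x \<noteq> 0"
proof -
  have v_term: "v (coeff p k * x ^ k) = v (coeff p k) + int k * v x" if "coeff p k \<noteq> 0" for k
    using that \<open>x \<noteq> 0\<close> by (simp add: valuation_mult valuation_power)
  have "(\<Sum>k\<le>degree p. coeff p k * x ^ k) \<noteq> 0"
    using assms by (intro sum_nonzero_if_unique_min_valuation) (auto simp: le_degree v_term)
  then show ?thesis
    by (simp add: poly_altdef)
qed

lemma infinite_UNIV_if_discrete_valuation: "infinite (UNIV :: 'a set)"
proof
  assume "finite (UNIV :: 'a set)"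
  then have "finite (range v)"
    by simp
  moreover have "range v = UNIV"
    using valuation_surj by (metis surj_def)
  ultimately show False
    by simp
qed

lemma ex_monom_add_no_root:
  fixes p :: "'a poly"
  assumes d: "5 \<le> d" and j: "j \<le> d" "j \<noteq> 1" "j \<noteq> d - 1"
    and p: "degree p \<le> d" "coeff p j = 0" "j \<noteq> 0 \<Longrightarrow> coeff p 0 \<noteq> 0" "j \<noteq> d \<Longrightarrow> coeff p d \<noteq> 0"
  shows "\<exists>a. a \<noteq> 0 \<and> \<not> has_root (p + monom a j)"
proof -
  define w where "w k = v (coeff p k)" for k
  define B where "B = (\<Sum>k\<le>d. \<bar>w k\<bar>)"
  have bound: "\<bar>w k\<bar> \<le> B" if "k \<le> d" for k
    unfolding B_def using that by (intro member_le_sum) auto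
  obtain N where "2 * (int d * B) < N" and no_tie:
    "j = 0 \<Longrightarrow> \<not> int d dvd (w d + N)" "j = d \<Longrightarrow> \<not> int d dvd (w 0 + N)"
    "0 < j \<Longrightarrow> j < d \<Longrightarrow> \<not> int j dvd (w 0 + N) \<and> \<not> int (d - j) dvd (w d + N)"
    using ex_deep_point_avoiding_ties[OF d j] by blast
  obtain a where a: "a \<noteq> 0" "v a = - N"
    using valuation_surj by blast
  define f where "f = p + monom a j"
  have coeff_f: "coeff f k = (if k = j then a else coeff p k)" for k
    using p(2) by (simp add: f_def coeff_monom)
  define S where "S = {k. k \<le> d \<and> coeff f k \<noteq> 0}"
  have S: "S \<subseteq> {..d}" "0 \<in> S" "j \<in> S" "d \<in> S"
    using a(1) p(3,4) j(1) by (auto simp: S_def coeff_f)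
  have degree_f: "coeff f k \<noteq> 0 \<Longrightarrow> k \<le> d" for k
    using p(1) j(1) le_degree[of p k] by (cases "k = j") (auto simp: coeff_f)
  have v_coeff_f: "v (coeff f k) = (w(j := - N)) k" for k
    by (simp add: coeff_f w_def a(2))
  have "poly f x \<noteq> 0" for x
  proof (cases "x = 0")
    case True
    then show ?thesis
      using S(2) by (simp add: poly_0_coeff_0 S_def)
  next
    case False
    obtain m where "m \<in> S" and unique:
      "\<forall>k\<in>S. k \<noteq> m \<longrightarrow> (w(j := - N)) m + int m * v x < (w(j := - N)) k + int k * v x"
      using unique_min_term_deep_point[OF S _ bound \<open>2 * (int d * B) < N\<close> no_tie] d by force
    show ?thesis
    proof (rule poly_nonzero_if_unique_min_term[OF False])
      show "coeff f m \<noteq> 0"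
        using \<open>m \<in> S\<close> by (simp add: S_def)
      show "v (coeff f m) + int m * v x < v (coeff f k) + int k * v x"
        if "k \<noteq> m" "coeff f k \<noteq> 0" for k
        using that unique degree_f[of k] by (simp add: v_coeff_f S_def)
    qed
  qed
  with a(1) show ?thesis
    unfolding has_root_def f_def by blast
qed

end

definition free_coeffs :: "nat \<Rightarrow> (nat \<Rightarrow> 'a option) \<Rightarrow> nat set" where
  "free_coeffs d c = {k. k \<le> d \<and> c k = None}"

definition legal_position :: "nat \<Rightarrow> (nat \<Rightarrow> 'a::zero option) \<Rightarrow> bool" where
  "legal_position d c \<longleftrightarrow> c 0 \<noteq> Some 0 \<and> c d \<noteq> Some 0"

lemma finite_free_coeffs [simp]: "finite (free_coeffs d c)"
  by (simp add: free_coeffs_def)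

lemma legal_move_iff: "legal_move d c i a \<longleftrightarrow> i \<in> free_coeffs d c \<and> ((i = 0 \<or> i = d) \<longrightarrow> a \<noteq> 0)"
  by (auto simp: legal_move_def free_coeffs_def)

lemma free_coeffs_upd:
  "i \<in> free_coeffs d c \<Longrightarrow> free_coeffs d (c(i := Some a)) = free_coeffs d c - {i}"
  by (auto simp: free_coeffs_def)

lemma card_free_coeffs_upd:
  assumes "legal_move d c i a" "card (free_coeffs d c) = Suc n"
  shows "card (free_coeffs d (c(i := Some a))) = n"
  using assms by (simp add: legal_move_iff free_coeffs_upd)

lemma legal_position_upd:
  "legal_move d c i a \<Longrightarrow> legal_position d c \<Longrightarrow> legal_position d (c(i := Some a))"
  by (auto simp: legal_move_def legal_position_def)

lemma coeff_game_poly: "coeff (game_poly d c) k = (if k \<le> d then the (c k) else 0)"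
  by (simp add: game_poly_def coeff_sum coeff_monom)

lemma game_poly_upd:
  "j \<le> d \<Longrightarrow> game_poly d (c(j := Some a)) = game_poly d (c(j := Some 0)) + monom a j"
  by (rule poly_eqI) (simp add: coeff_game_poly coeff_monom)

lemma last_move_poly:
  assumes "free_coeffs d c = {j}" "legal_position d c"
  defines "p \<equiv> game_poly d (c(j := Some 0))"
  shows "degree p \<le> d" "coeff p j = 0" "j \<noteq> 0 \<Longrightarrow> coeff p 0 \<noteq> 0" "j \<noteq> d \<Longrightarrow> coeff p d \<noteq> 0"
proof -
  have filled: "c k \<noteq> None" if "k \<le> d" "k \<noteq> j" for k
    using assms(1) that by (auto simp: free_coeffs_def)
  show "degree p \<le> d"
    by (rule degree_le) (simp add: p_def coeff_game_poly)
  show "coeff p j = 0" "j \<noteq> 0 \<Longrightarrow> coeff p 0 \<noteq> 0" "j \<noteq> d \<Longrightarrow> coeff p d \<noteq> 0"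
    using assms(2) filled[of 0] filled[of d]
    by (auto simp: p_def coeff_game_poly legal_position_def)
qed

lemma ex_card_Diff_singleton_Int:
  assumes "finite E" "F \<noteq> {}"
  shows "\<exists>i\<in>F. card ((F - {i}) \<inter> E) = card (F \<inter> E) - 1"
proof (cases "F \<inter> E = {}")
  case True
  obtain i where "i \<in> F"
    using assms(2) by blast
  moreover from True have "(F - {i}) \<inter> E = {}"
    by blast
  ultimately show ?thesis
    using True by (metis card.empty zero_diff)
next
  case False
  then obtain i where i: "i \<in> F \<inter> E"
    by blast
  then have "card ((F - {i}) \<inter> E) = card (F \<inter> E - {i})"
    by (metis Int_Diff Int_commute Diff_Int_distrib2)
  also have "\<dots> = card (F \<inter> E) - 1"
    using i assms(1) by simp
  finally show ?thesis
    using i by blast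
qed

lemma wanda_wins_if_moves_last:
  fixes c :: "nat \<Rightarrow> 'a::field option"
  assumes "infinite (UNIV :: 'a set)" "0 < d"
  shows "card (free_coeffs d c) = Suc n \<Longrightarrow> legal_position d c \<Longrightarrow> (w \<longleftrightarrow> odd (Suc n)) \<Longrightarrow>
    wanda_wins d (Suc n) w c"
proof (induction n arbitrary: c w)
  case 0
  then have "card (free_coeffs d c) = 1"
    by simp
  then obtain j where free: "free_coeffs d c = {j}"
    by (rule card_1_singletonE)
  then have "j \<le> d"
    by (auto simp: free_coeffs_def)
  define p where "p = game_poly d (c(j := Some 0))"
  note p = last_move_poly[OF free "0.prems"(2), folded p_def]
  have "p \<noteq> 0"
  proof (cases "j = 0")
    case True
    with p(4) \<open>0 < d\<close> have "coeff p d \<noteq> 0"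
      by simp
    then show ?thesis
      by auto
  next
    case False
    with p(3) have "coeff p 0 \<noteq> 0"
      by simp
    then show ?thesis
      by auto
  qed
  then obtain a where "a \<noteq> 0" "has_root (p + monom a j)"
    using ex_monom_add_has_root assms(1) by blast
  moreover have "game_poly d (c(j := Some a)) = p + monom a j"
    unfolding p_def using \<open>j \<le> d\<close> by (rule game_poly_upd)
  ultimately have "legal_move d c j a" "wanda_wins d 0 False (c(j := Some a))"
    by (simp_all add: legal_move_iff free)
  moreover have w
    using "0.prems"(3) by simp
  ultimately show ?case
    by auto
next
  case (Suc n)
  have next_wins: "wanda_wins d (Suc n) w' (c(i := Some a))"
    if move: "legal_move d c i a" and "w' \<longleftrightarrow> odd (Suc n)" for i a w'
    by (rule Suc.IH[OF card_free_coeffs_upd[OF move Suc.prems(1)] legal_position_upd[OF move Suc.prems(2)]])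
      (use that(2) in simp)
  show ?case
  proof (cases w)
    case True
    from Suc.prems(1) have "free_coeffs d c \<noteq> {}"
      by auto
    then obtain i where "i \<in> free_coeffs d c"
      by blast
    then have "legal_move d c i 1"
      by (simp add: legal_move_iff)
    moreover have "\<not> odd (Suc n)"
      using True Suc.prems(3) by simp
    ultimately show ?thesis
      using True next_wins[of i 1 False] by auto
  next
    case False
    moreover have "odd (Suc n)"
      using False Suc.prems(3) by simp
    ultimately show ?thesis
      using next_wins[of _ _ True] by simp
  qed
qed

text \<open>Nora's strategy: fill a_1 or a_(d-1) whenever one of them is still free. The invariant
  says that she has more moves left than there are free coefficients among a_1, a_(d-1); since
  she moves last, she has Suc (Suc n) div 2 of the remaining Suc n moves.\<close>

lemma nora_wins_if_moves_last:
  fixes v :: "'a::field \<Rightarrow> int" and c :: "nat \<Rightarrow> 'a option"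
  assumes dv: "discrete_valuation v" and d: "5 \<le> d"
  shows "card (free_coeffs d c) = Suc n \<Longrightarrow> legal_position d c \<Longrightarrow> (\<not> w \<longleftrightarrow> odd (Suc n)) \<Longrightarrow>
    card (free_coeffs d c \<inter> {1, d - 1}) < Suc (Suc n) div 2 \<Longrightarrow> nora_wins d (Suc n) w c"
proof (induction n arbitrary: c w)
  case 0
  then obtain j where free: "free_coeffs d c = {j}"
    by (auto simp: card_Suc_eq)
  then have j: "j \<le> d" "j \<noteq> 1" "j \<noteq> d - 1"
    using "0.prems"(4) by (auto simp: free_coeffs_def)
  define p where "p = game_poly d (c(j := Some 0))"
  obtain a where "a \<noteq> 0" "\<not> has_root (p + monom a j)"
    using ex_monom_add_no_root[OF dv d j last_move_poly[OF free "0.prems"(2)]] unfolding p_def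
    by blast
  moreover have "game_poly d (c(j := Some a)) = p + monom a j"
    unfolding p_def using j(1) by (rule game_poly_upd)
  ultimately have "legal_move d c j a" "nora_wins d 0 True (c(j := Some a))"
    by (simp_all add: legal_move_iff free)
  with "0.prems"(3) show ?case
    by auto
next
  case (Suc n)
  let ?E = "{1, d - 1}"
  show ?case
  proof (cases w)
    case True
    then have "even n"
      using Suc.prems(3) by simp
    then have moves_left: "Suc (Suc (Suc n)) div 2 = Suc (Suc n) div 2"
      by (auto elim: evenE)
    have "nora_wins d (Suc n) False (c(i := Some a))" if move: "legal_move d c i a" for i a
    proof (rule Suc.IH)
      show "card (free_coeffs d (c(i := Some a))) = Suc n"
        using move Suc.prems(1) by (rule card_free_coeffs_upd)
      show "legal_position d (c(i := Some a))"
        using move Suc.prems(2) by (rule legal_position_upd)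
      show "\<not> False \<longleftrightarrow> odd (Suc n)"
        using \<open>even n\<close> by simp
      have "card (free_coeffs d (c(i := Some a)) \<inter> ?E) \<le> card (free_coeffs d c \<inter> ?E)"
        using move by (intro card_mono) (auto simp: legal_move_iff free_coeffs_upd)
      then show "card (free_coeffs d (c(i := Some a)) \<inter> ?E) < Suc (Suc n) div 2"
        using Suc.prems(4) moves_left by linarith
    qed
    with True show ?thesis
      by simp
  next
    case False
    then have "odd n"
      using Suc.prems(3) by simp
    then have moves_left: "Suc (Suc (Suc n)) div 2 = Suc (Suc (Suc n) div 2)" "0 < Suc (Suc n) div 2"
      by (auto elim: oddE)
    obtain i where i: "i \<in> free_coeffs d c"
      and fewer: "card ((free_coeffs d c - {i}) \<inter> ?E) = card (free_coeffs d c \<inter> ?E) - 1"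
      using ex_card_Diff_singleton_Int[of ?E "free_coeffs d c"] Suc.prems(1) by force
    then have move: "legal_move d c i 1"
      by (simp add: legal_move_iff)
    have "nora_wins d (Suc n) True (c(i := Some 1))"
    proof (rule Suc.IH)
      show "card (free_coeffs d (c(i := Some 1))) = Suc n"
        using move Suc.prems(1) by (rule card_free_coeffs_upd)
      show "legal_position d (c(i := Some 1))"
        using move Suc.prems(2) by (rule legal_position_upd)
      show "\<not> True \<longleftrightarrow> odd (Suc n)"
        using \<open>odd n\<close> by simp
      show "card (free_coeffs d (c(i := Some 1)) \<inter> ?E) < Suc (Suc n) div 2"
        unfolding free_coeffs_upd[OF i] fewer using Suc.prems(4) moves_left by linarith
    qed
    with False move show ?thesis
      by auto
  qed
qed

theorem theorem5:
  fixes v :: "'a::field \<Rightarrow> int" and d :: nat and wanda_first :: bool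
  assumes "complete_dvf v" and "d > 4"
  shows "if wanda_moves_last d wanda_first
         then wanda_has_winning_strategy TYPE('a) d wanda_first
         else nora_has_winning_strategy TYPE('a) d wanda_first"
proof -
  have dv: "discrete_valuation v"
    using assms(1) by (simp add: complete_dvf_def)
  have d: "0 < d" "5 \<le> d"
    using assms(2) by simp_all
  let ?c = "\<lambda>_. None :: 'a option"
  have free: "free_coeffs d ?c = {..d}"
    by (auto simp: free_coeffs_def)
  have start: "card (free_coeffs d ?c) = Suc d" "legal_position d ?c"
    by (simp_all add: free legal_position_def)
  show ?thesis
  proof (cases "wanda_moves_last d wanda_first")
    case True
    then have "wanda_first \<longleftrightarrow> odd (Suc d)"
      by (simp add: wanda_moves_last_def)
    with start have "wanda_wins d (Suc d) wanda_first ?c"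
      by (intro wanda_wins_if_moves_last[OF infinite_UNIV_if_discrete_valuation[OF dv] d(1)])
    with True show ?thesis
      by (simp add: wanda_has_winning_strategy_def)
  next
    case False
    then have "\<not> wanda_first \<longleftrightarrow> odd (Suc d)"
      by (auto simp: wanda_moves_last_def)
    moreover have "card (free_coeffs d ?c \<inter> {1, d - 1}) < Suc (Suc d) div 2"
      using d by (simp add: free insert_absorb)
    ultimately have "nora_wins d (Suc d) wanda_first ?c"
      using start by (intro nora_wins_if_moves_last[OF dv d(2)])
    with False show ?thesis
      by (simp add: nora_has_winning_strategy_def)
  qed
qed

end
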